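(* Let $T$ be a triangulation of the oriented 2-sphere (a simplicial complex), $z:\mathcal V(T)\to\mathbb C$ injective with no degenerate face. For every vertex $v$ and edge $e$, $$\frac{\partial\theta_e}{\partial z_v}=\frac{\mathrm i}2\sum_{e'\in\mathcal E(T)}A_{v,e'}E_{e',e},\qquad \frac{\partial\theta_e}{\partial\bar z_v}=-\frac{\mathrm i}2\sum_{e'\in\mathcal E(T)}\bar A_{v,e'}E_{e',e}.$$
   Context: Faces are written $(a,b,c)$ in positive cyclic order for the orientation. For an edge $e=\{a,b\}$ with adjacent faces $(a,b,c)$ and $(b,a,d)$, $\theta_e=\pi-\mathrm{Arg}\frac{z_b-z_c}{z_a-z_c}-\mathrm{Arg}\frac{z_a-z_d}{z_b-z_d}$ (local continuous branch; for a Delaunay triangulation with counterclockwise faces this is $\pi$ minus the sum of the two angles opposite $e$). $A_{v,e}=\frac1{z_v-z_{v'}}$ if $e=\{v,v'\}$, and $0$ if $v\notin e$; $\bar A$ is its complex conjugate. $E_{e,e'}$: for $e\neq e'$ in a common face with edges $\{a,b\},\{b,c\},\{c,a\}$ in positive cyclic order, $E_{e,e'}=-1$ if $e'$ immediately follows $e$ and $+1$ if $e'$ immediately precedes $e$; otherwise $0$. Derivatives are Wirtinger derivatives. *)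

theory Defs
  imports "HOL-Analysis.Analysis"
begin

text \<open>A triangulated surface is given by a finite vertex set V and a set F of
  positively oriented faces, written as triples (a,b,c).\<close>

definition edges :: "('v \<times> 'v \<times> 'v) set \<Rightarrow> 'v set set" where
  "edges F = {{a, b} | a b c. (a, b, c) \<in> F}"

definition sphere_triangulation :: "'v set \<Rightarrow> ('v \<times> 'v \<times> 'v) set \<Rightarrow> bool" where
  "sphere_triangulation V F \<longleftrightarrow>
     finite V \<and> F \<noteq> {} \<and>
     \<comment> \<open>faces are triples of distinct vertices\<close>
     (\<forall>a b c. (a, b, c) \<in> F \<longrightarrow> a \<in> V \<and> b \<in> V \<and> c \<in> V \<and> a \<noteq> b \<and> b \<noteq> c \<and> a \<noteq> c) \<and>
     \<comment> \<open>every vertex belongs to a face\<close>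
     (\<forall>v\<in>V. \<exists>b c. (v, b, c) \<in> F) \<and>
     \<comment> \<open>closed under cyclic rotation (same oriented face)\<close>
     (\<forall>a b c. (a, b, c) \<in> F \<longrightarrow> (b, c, a) \<in> F) \<and>
     \<comment> \<open>simplicial complex: a vertex set spans at most one face\<close>
     (\<forall>a b c a' b' c'. (a, b, c) \<in> F \<longrightarrow> (a', b', c') \<in> F \<longrightarrow> {a, b, c} = {a', b', c'} \<longrightarrow>
        (a', b', c') \<in> {(a, b, c), (b, c, a), (c, a, b)}) \<and>
     \<comment> \<open>each directed edge is in at most one positively oriented face\<close>
     (\<forall>a b c c'. (a, b, c) \<in> F \<longrightarrow> (a, b, c') \<in> F \<longrightarrow> c = c') \<and>
     \<comment> \<open>each edge is in a second face with the opposite induced orientation\<close>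
     (\<forall>a b c. (a, b, c) \<in> F \<longrightarrow> (\<exists>d. (b, a, d) \<in> F)) \<and>
     \<comment> \<open>vertex links are single cycles (manifold condition)\<close>
     (\<forall>v a b a' b'. (v, a, b) \<in> F \<longrightarrow> (v, a', b') \<in> F \<longrightarrow>
        (a, a') \<in> {(x, y). (v, x, y) \<in> F}\<^sup>*) \<and>
     \<comment> \<open>connected\<close>
     (\<forall>x\<in>V. \<forall>y\<in>V. (x, y) \<in> {(p, q). \<exists>r. (p, q, r) \<in> F}\<^sup>*) \<and>
     \<comment> \<open>Euler characteristic 2 (each face is listed 3 times in F)\<close>
     int (card V) - int (card (edges F)) + int (card F div 3) = 2"

definition nondegenerate_face :: "('v \<Rightarrow> complex) \<Rightarrow> 'v \<Rightarrow> 'v \<Rightarrow> 'v \<Rightarrow> bool" where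
  "nondegenerate_face z a b c \<longleftrightarrow> \<not> collinear {z a, z b, z c}"

text \<open>theta_e for the edge e = {a,b} with adjacent faces (a,b,c) and (b,a,d);
  the principal argument Arg is a continuous branch near any configuration where
  both faces are non-degenerate.\<close>
definition theta :: "('v \<Rightarrow> complex) \<Rightarrow> 'v \<Rightarrow> 'v \<Rightarrow> 'v \<Rightarrow> 'v \<Rightarrow> real" where
  "theta z a b c d = pi - Arg ((z b - z c) / (z a - z c)) - Arg ((z a - z d) / (z b - z d))"

definition Amat :: "('v \<Rightarrow> complex) \<Rightarrow> 'v \<Rightarrow> 'v set \<Rightarrow> complex" where
  "Amat z v e = (if v \<in> e then 1 / (z v - z (the_elem (e - {v}))) else 0)"

definition Emat :: "('v \<times> 'v \<times> 'v) set \<Rightarrow> 'v set \<Rightarrow> 'v set \<Rightarrow> complex" where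
  "Emat F e e' =
     (if e \<noteq> e' \<and> (\<exists>a b c. (a, b, c) \<in> F \<and> e = {a, b} \<and> e' = {b, c}) then -1
      else if e \<noteq> e' \<and> (\<exists>a b c. (a, b, c) \<in> F \<and> e' = {a, b} \<and> e = {b, c}) then 1
      else 0)"

text \<open>Wirtinger derivatives of a real-valued function with real derivative D
  (an R-linear map complex \<Rightarrow> real).\<close>
definition wirt_dz :: "(complex \<Rightarrow> real) \<Rightarrow> complex" where
  "wirt_dz D = (complex_of_real (D 1) - \<i> * complex_of_real (D \<i>)) / 2"

definition wirt_dzbar :: "(complex \<Rightarrow> real) \<Rightarrow> complex" where
  "wirt_dzbar D = (complex_of_real (D 1) + \<i> * complex_of_real (D \<i>)) / 2"

end

theory Submission
  imports Defs
begin

text \<open>Away from the non-positive reals \<open>Arg = Im \<circ> Ln\<close>, so moving \<open>z v\<close> changes each of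
  the two arguments in \<open>\<theta>\<^sub>e\<close> by the imaginary part of the logarithmic derivative of a ratio
  \<open>(z p - z r) / (z q - z r)\<close>, and that logarithmic derivative is
  \<open>A(v, {p, r}) - A(v, {q, r})\<close>. Hence \<open>d\<theta>\<^sub>e(h) = - Im (X h)\<close>, where \<open>X\<close> is a signed sum of
  \<open>A(v, e')\<close> over the four other edges of the two faces at \<open>e\<close>; these are exactly the edges
  with \<open>E(e', e) \<noteq> 0\<close>, and the signs match. The Wirtinger derivatives of \<open>h \<mapsto> - Im (X h)\<close>
  are \<open>i X / 2\<close> and \<open>- i cnj X / 2\<close>.\<close>

lemma not_collinear_imp_ratio_not_real:
  fixes x y u :: complex
  assumes "\<not> collinear {x, y, u}"
  shows "(x - u) / (y - u) \<notin> \<real>"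
proof
  assume "(x - u) / (y - u) \<in> \<real>"
  then obtain r where r: "(x - u) / (y - u) = of_real r" by (metis Reals_cases)
  have "y \<noteq> u" using assms by (metis collinear_2 insert_absorb2 insert_commute)
  with r have "x - u = r *\<^sub>R (y - u)" by (simp add: field_simps scaleR_conv_of_real)
  then have "collinear {y, u, x}" by (simp add: collinear_3 collinear_lemma)
  with assms show False by (simp add: insert_commute)
qed

lemma has_derivative_Arg:
  assumes "w \<notin> \<real>\<^sub>\<le>\<^sub>0"
  shows "(Arg has_derivative (\<lambda>h. Im (h / w))) (at w)"
proof -
  have "((\<lambda>u. Im (Ln u)) has_derivative (\<lambda>h. Im (inverse w * h))) (at w)"
    using has_derivative_Im[OF has_field_derivative_Ln[OF assms, unfolded has_field_derivative_def]] .
  then have "((\<lambda>u. Im (Ln u)) has_derivative (\<lambda>h. Im (h / w))) (at w)"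
    by (simp add: divide_inverse mult.commute)
  then show ?thesis
    by (rule has_derivative_transform_within_open[where s = "- {0}"])
       (use assms in \<open>auto simp: Arg_def\<close>)
qed

lemma has_derivative_Arg_comp:
  assumes "(W has_field_derivative W') (at x)" and "W x \<notin> \<real>"
  shows "((\<lambda>u. Arg (W u)) has_derivative (\<lambda>h. Im (W' / W x * h))) (at x)"
proof -
  have "W x \<notin> \<real>\<^sub>\<le>\<^sub>0" using assms(2) nonpos_Reals_subset_Reals by blast
  from has_derivative_compose[OF assms(1)[unfolded has_field_derivative_def] has_derivative_Arg[OF this]]
  show ?thesis by (simp add: field_simps)
qed

lemma has_field_derivative_fun_upd:
  "((\<lambda>w. (z(v := w)) x) has_field_derivative of_bool (x = v)) (at y)"
  by (cases "x = v") (auto intro: derivative_eq_intros)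

lemma Amat_doubleton:
  assumes "x \<noteq> y"
  shows "Amat z v {x, y} = (of_bool (x = v) - of_bool (y = v)) / (z x - z y)"
proof -
  consider "v = x" | "v = y" | "v \<notin> {x, y}" by blast
  then show ?thesis
  proof cases
    case 1
    then have "{x, y} - {v} = {y}" using assms by auto
    with 1 assms show ?thesis by (simp add: Amat_def)
  next
    case 2
    then have "{x, y} - {v} = {x}" using assms by auto
    moreover have "1 / (z y - z x) = - 1 / (z x - z y)"
      by (simp add: divide_minus_left divide_minus_right[symmetric] del: divide_minus_right)
    ultimately show ?thesis using 2 assms by (simp add: Amat_def)
  next
    case 3
    then show ?thesis by (auto simp: Amat_def)
  qed
qed

lemma has_field_derivative_vertex_ratio:
  fixes z :: "'v \<Rightarrow> complex"
  assumes "z p \<noteq> z r" and "z q \<noteq> z r"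
  shows "((\<lambda>w. ((z(v := w)) p - (z(v := w)) r) / ((z(v := w)) q - (z(v := w)) r))
           has_field_derivative (z p - z r) / (z q - z r) * (Amat z v {p, r} - Amat z v {q, r}))
         (at (z v))"
proof -
  from assms have "p \<noteq> r" "q \<noteq> r" "z p - z r \<noteq> 0" "z q - z r \<noteq> 0" by auto
  have quotient_rule: "(dP * Q - P * dQ) / (Q * Q) = P / Q * (dP / P - dQ / Q)"
    if "P \<noteq> 0" "Q \<noteq> 0" for P Q dP dQ :: complex
    using that by (simp add: field_simps)
  show ?thesis
    by (rule DERIV_cong[OF DERIV_divide[OF
          DERIV_diff[OF has_field_derivative_fun_upd has_field_derivative_fun_upd]
          DERIV_diff[OF has_field_derivative_fun_upd has_field_derivative_fun_upd]]])
       (use \<open>z q - z r \<noteq> 0\<close> in simp,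
        simp only: fun_upd_triv quotient_rule Amat_doubleton not_False_eq_True \<open>p \<noteq> r\<close> \<open>q \<noteq> r\<close>
          \<open>z p - z r \<noteq> 0\<close> \<open>z q - z r \<noteq> 0\<close>)
qed

lemma has_derivative_Arg_vertex_ratio:
  fixes z :: "'v \<Rightarrow> complex"
  assumes "\<not> collinear {z p, z q, z r}"
  shows "((\<lambda>w. Arg (((z(v := w)) p - (z(v := w)) r) / ((z(v := w)) q - (z(v := w)) r)))
           has_derivative (\<lambda>h. Im ((Amat z v {p, r} - Amat z v {q, r}) * h))) (at (z v))"
proof -
  have "z p \<noteq> z r" "z q \<noteq> z r"
    using assms by (metis collinear_2 insert_absorb2 insert_commute)+
  moreover have "((z(v := z v)) p - (z(v := z v)) r) / ((z(v := z v)) q - (z(v := z v)) r) \<notin> \<real>"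
    using not_collinear_imp_ratio_not_real[OF assms] by simp
  ultimately show ?thesis
    by (rule has_derivative_Arg_comp[OF has_field_derivative_vertex_ratio, THEN has_derivative_eq_rhs])
       (use \<open>z p \<noteq> z r\<close> \<open>z q \<noteq> z r\<close> in simp)
qed

lemma has_derivative_theta:
  assumes "\<not> collinear {z a, z b, z c}" and "\<not> collinear {z b, z a, z d}"
  shows "((\<lambda>w. theta (z(v := w)) a b c d) has_derivative
           (\<lambda>h. - Im ((Amat z v {b, c} + Amat z v {a, d} - Amat z v {a, c} - Amat z v {b, d}) * h)))
         (at (z v))"
proof -
  have "\<not> collinear {z b, z a, z c}" "\<not> collinear {z a, z b, z d}"
    using assms by (simp_all add: insert_commute)
  note Arg_terms = this[THEN has_derivative_Arg_vertex_ratio[where v = v]]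
  from has_derivative_diff[OF has_derivative_diff[OF has_derivative_const Arg_terms(1)] Arg_terms(2)]
  show ?thesis
    unfolding theta_def by (rule has_derivative_eq_rhs) (auto simp: algebra_simps)
qed

lemma wirt_dz_minus_Im_mult: "wirt_dz (\<lambda>h. - Im (X * h)) = \<i> / 2 * X"
  by (simp add: wirt_dz_def complex_eq_iff)

lemma wirt_dzbar_minus_Im_mult: "wirt_dzbar (\<lambda>h. - Im (X * h)) = - \<i> / 2 * cnj X"
  by (simp add: wirt_dzbar_def complex_eq_iff)

lemma sphere_triangulation_face:
  assumes "sphere_triangulation V F" and "(a, b, c) \<in> F"
  shows "a \<in> V" "b \<in> V" "c \<in> V" "a \<noteq> b" "b \<noteq> c" "a \<noteq> c"
proof -
  have "\<forall>a b c. (a, b, c) \<in> F \<longrightarrow> a \<in> V \<and> b \<in> V \<and> c \<in> V \<and> a \<noteq> b \<and> b \<noteq> c \<and> a \<noteq> c"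
    using assms(1) unfolding sphere_triangulation_def by (elim conjE) assumption
  with assms(2) show "a \<in> V" "b \<in> V" "c \<in> V" "a \<noteq> b" "b \<noteq> c" "a \<noteq> c" by blast+
qed

lemma sphere_triangulation_rotate:
  assumes "sphere_triangulation V F" and "(a, b, c) \<in> F"
  shows "(b, c, a) \<in> F"
proof -
  have "\<forall>a b c. (a, b, c) \<in> F \<longrightarrow> (b, c, a) \<in> F"
    using assms(1) unfolding sphere_triangulation_def by (elim conjE) assumption
  with assms(2) show ?thesis by blast
qed

lemma sphere_triangulation_apex_unique:
  assumes "sphere_triangulation V F" and "(a, b, c) \<in> F" and "(a, b, c') \<in> F"
  shows "c = c'"
proof -
  have "\<forall>a b c c'. (a, b, c) \<in> F \<longrightarrow> (a, b, c') \<in> F \<longrightarrow> c = c'"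
    using assms(1) unfolding sphere_triangulation_def by (elim conjE) assumption
  with assms(2,3) show ?thesis by blast
qed

lemma sphere_triangulation_opposite_apex:
  assumes T: "sphere_triangulation V F" and f1: "(a, b, c) \<in> F" and f2: "(b, a, d) \<in> F"
  shows "c \<noteq> d"
proof
  assume "c = d"
  have "\<forall>a b c a' b' c'. (a, b, c) \<in> F \<longrightarrow> (a', b', c') \<in> F \<longrightarrow> {a, b, c} = {a', b', c'} \<longrightarrow>
          (a', b', c') \<in> {(a, b, c), (b, c, a), (c, a, b)}"
    using T unfolding sphere_triangulation_def by (elim conjE) assumption
  moreover have "{a, b, c} = {b, a, c}" by (simp add: insert_commute)
  ultimately have "(b, a, c) \<in> {(a, b, c), (b, c, a), (c, a, b)}"
    using f1 f2 \<open>c = d\<close> by blast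
  with sphere_triangulation_face[OF T f1] show False by auto
qed

lemma sphere_triangulation_finite_edges:
  assumes "sphere_triangulation V F"
  shows "finite (edges F)"
proof -
  have "finite V" using assms unfolding sphere_triangulation_def by (elim conjE)
  moreover have "F \<subseteq> V \<times> V \<times> V" using sphere_triangulation_face[OF assms] by auto
  ultimately have "finite F" by (meson finite_SigmaI finite_subset)
  moreover have "edges F = (\<lambda>(a, b, c). {a, b}) ` F" unfolding edges_def by force
  ultimately show ?thesis by simp
qed

lemma edge_precedes_iff:
  assumes T: "sphere_triangulation V F" and f1: "(a, b, c) \<in> F" and f2: "(b, a, d) \<in> F"
  shows "(\<exists>x y w. (x, y, w) \<in> F \<and> e = {x, y} \<and> {a, b} = {y, w}) \<longleftrightarrow> e = {a, c} \<or> e = {b, d}"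
proof
  assume "\<exists>x y w. (x, y, w) \<in> F \<and> e = {x, y} \<and> {a, b} = {y, w}"
  then obtain x y w where xyw: "(x, y, w) \<in> F" "e = {x, y}" "{a, b} = {y, w}" by blast
  then consider "y = a" "w = b" | "y = b" "w = a" by (auto simp: doubleton_eq_iff)
  then show "e = {a, c} \<or> e = {b, d}"
  proof cases
    case 1
    with sphere_triangulation_rotate[OF T xyw(1)] have "(a, b, x) \<in> F" by simp
    with sphere_triangulation_apex_unique[OF T f1] have "x = c" by blast
    with xyw(2) 1 show ?thesis by (auto simp: insert_commute)
  next
    case 2
    with sphere_triangulation_rotate[OF T xyw(1)] have "(b, a, x) \<in> F" by simp
    with sphere_triangulation_apex_unique[OF T f2] have "x = d" by blast
    with xyw(2) 2 show ?thesis by (auto simp: insert_commute)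
  qed
next
  have "(c, a, b) \<in> F" "(d, b, a) \<in> F"
    using f1 f2 by (meson T sphere_triangulation_rotate)+
  then show "e = {a, c} \<or> e = {b, d} \<Longrightarrow> \<exists>x y w. (x, y, w) \<in> F \<and> e = {x, y} \<and> {a, b} = {y, w}"
    by (auto simp: insert_commute)
qed

lemma edge_follows_iff:
  assumes T: "sphere_triangulation V F" and f1: "(a, b, c) \<in> F" and f2: "(b, a, d) \<in> F"
  shows "(\<exists>x y w. (x, y, w) \<in> F \<and> {a, b} = {x, y} \<and> e = {y, w}) \<longleftrightarrow> e = {b, c} \<or> e = {a, d}"
proof
  assume "\<exists>x y w. (x, y, w) \<in> F \<and> {a, b} = {x, y} \<and> e = {y, w}"
  then obtain x y w where xyw: "(x, y, w) \<in> F" "{a, b} = {x, y}" "e = {y, w}" by blast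
  then consider "x = a" "y = b" | "x = b" "y = a" by (auto simp: doubleton_eq_iff)
  then show "e = {b, c} \<or> e = {a, d}"
  proof cases
    case 1
    with sphere_triangulation_apex_unique[OF T f1] xyw show ?thesis by auto
  next
    case 2
    with sphere_triangulation_apex_unique[OF T f2] xyw show ?thesis by auto
  qed
next
  show "e = {b, c} \<or> e = {a, d} \<Longrightarrow> \<exists>x y w. (x, y, w) \<in> F \<and> {a, b} = {x, y} \<and> e = {y, w}"
    using f1 f2 by (auto simp: insert_commute)
qed

lemma sum_edges_Emat_adjacent:
  fixes g :: "'v set \<Rightarrow> complex"
  assumes T: "sphere_triangulation V F" and f1: "(a, b, c) \<in> F" and f2: "(b, a, d) \<in> F"
  shows "(\<Sum>e\<in>edges F. g e * Emat F e {a, b}) = g {b, c} + g {a, d} - g {a, c} - g {b, d}"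
proof -
  note face = sphere_triangulation_face[OF T f1] sphere_triangulation_face[OF T f2]
  have "c \<noteq> d" by (rule sphere_triangulation_opposite_apex[OF T f1 f2])
  define K where "K = {{a, c}, {b, d}, {b, c}, {a, d}}"
  define s :: "'v set \<Rightarrow> complex" where
    "s e = (if e = {a, c} \<or> e = {b, d} then -1 else if e = {b, c} \<or> e = {a, d} then 1 else 0)" for e
  have "Emat F e {a, b} = s e" for e
    using face edge_precedes_iff[OF T f1 f2, of e] edge_follows_iff[OF T f1 f2, of e]
    unfolding Emat_def s_def by (auto simp: doubleton_eq_iff)
  then have "(\<Sum>e\<in>edges F. g e * Emat F e {a, b}) = (\<Sum>e\<in>edges F. g e * s e)" by simp
  also have "\<dots> = (\<Sum>e\<in>K. g e * s e)"
  proof (rule sum.mono_neutral_right[OF sphere_triangulation_finite_edges[OF T]])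
    have "(b, c, a) \<in> F" "(c, a, b) \<in> F" "(d, b, a) \<in> F" "(a, d, b) \<in> F"
      using f1 f2 by (meson T sphere_triangulation_rotate)+
    then show "K \<subseteq> edges F"
      unfolding K_def edges_def by (auto simp: insert_commute)
  qed (auto simp: K_def s_def)
  also have "\<dots> = g {b, c} + g {a, d} - g {a, c} - g {b, d}"
    using face \<open>c \<noteq> d\<close> unfolding K_def s_def by (simp add: doubleton_eq_iff)
  finally show ?thesis .
qed

theorem proposition3:
  fixes V :: "'v set" and F :: "('v \<times> 'v \<times> 'v) set" and z :: "'v \<Rightarrow> complex"
  assumes T: "sphere_triangulation V F"
    and inj: "inj_on z V"
    and nondeg: "\<forall>a b c. (a, b, c) \<in> F \<longrightarrow> nondegenerate_face z a b c"
    and v: "v \<in> V"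
    and f1: "(a, b, c) \<in> F" and f2: "(b, a, d) \<in> F"
  shows "\<exists>D. ((\<lambda>w. theta (z(v := w)) a b c d) has_derivative D) (at (z v)) \<and>
             wirt_dz D = \<i> / 2 * (\<Sum>e'\<in>edges F. Amat z v e' * Emat F e' {a, b}) \<and>
             wirt_dzbar D = - \<i> / 2 * (\<Sum>e'\<in>edges F. cnj (Amat z v e') * Emat F e' {a, b})"
proof -
  have "\<not> collinear {z a, z b, z c}" "\<not> collinear {z b, z a, z d}"
    using nondeg f1 f2 by (simp_all add: nondegenerate_face_def)
  note theta_deriv = has_derivative_theta[where v = v, OF this]
  note sum_Emat = sum_edges_Emat_adjacent[OF T f1 f2]
  show ?thesis
    by (intro exI conjI, fact theta_deriv)
       (simp_all only: wirt_dz_minus_Im_mult wirt_dzbar_minus_Im_mult sum_Emat, simp_all)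
qed

end
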